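(* Let $\mathcal{P}$ be a locally geometric poset and $\mathcal{Q}$ a TM-ideal of $\mathcal{P}$ with $\operatorname{rk}(\mathcal{Q})=\operatorname{rk}(\mathcal{P})-1$. Then for every $a\in A(\mathcal{P})\setminus A(\mathcal{Q})$ there is a poset isomorphism $\mathcal{Q}\cong\mathcal{P}_{\ge a}$.
   Context: All posets are finite, have a unique minimal element $\hat0$ and are ranked; $\operatorname{rk}$ of a poset is the maximum rank of its elements. $A(\cdot)$ denotes the set of atoms (rank-1 elements). $\bigvee T$ is the set of minimal upper bounds of $T$, $x\vee y=\bigvee\{x,y\}$, $x\wedge y$ the meet. A lattice is geometric if $y$ covers $x$ iff there is an atom $a\not\le x$ with $y=x\vee a$; $\mathcal{P}$ is locally geometric if each $\mathcal{P}_{\le x}$ is a geometric lattice. An element $x$ of a geometric lattice $L$ is modular if $x\wedge(y\vee z)=(x\wedge y)\vee z$ for all $z\le x$, $y\in L$. An order ideal $\mathcal{Q}$ is pure if all its maximal elements have the same rank and join-closed if $T\subseteq\mathcal{Q}$ implies $\bigvee T\subseteq\mathcal{Q}$. A TM-ideal of $\mathcal{P}$ is a pure, join-closed order ideal $\mathcal{Q}$ such that (1* ) $|a\vee y|=1$ for all $y\in\mathcal{Q}$ and $a\in A(\mathcal{P})\setminus A(\mathcal{Q})$, and (2) for every maximal $x\in\mathcal{P}$ there is a maximal $y\in\mathcal{Q}$ that is modular in $\mathcal{P}_{\le x}$. $\mathcal{P}_{\ge a}=\{y\in\mathcal{P}:y\ge a\}$ with the induced order. *)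

theory Defs
  imports Main
begin

text \<open>A poset is given by a carrier set P and an order relation le (only its
restriction to P matters). All notions below are relative to a carrier.\<close>

definition partial_order_on' :: "'a set \<Rightarrow> ('a \<Rightarrow> 'a \<Rightarrow> bool) \<Rightarrow> bool" where
  "partial_order_on' P le \<longleftrightarrow>
     (\<forall>x\<in>P. le x x) \<and>
     (\<forall>x\<in>P. \<forall>y\<in>P. le x y \<and> le y x \<longrightarrow> x = y) \<and>
     (\<forall>x\<in>P. \<forall>y\<in>P. \<forall>z\<in>P. le x y \<and> le y z \<longrightarrow> le x z)"

definition pchain :: "'a set \<Rightarrow> ('a \<Rightarrow> 'a \<Rightarrow> bool) \<Rightarrow> 'a set \<Rightarrow> bool" where
  "pchain P le C \<longleftrightarrow> C \<subseteq> P \<and> (\<forall>x\<in>C. \<forall>y\<in>C. le x y \<or> le y x)"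

text \<open>Height (= rank in a ranked poset with bottom): length of a longest chain below x.\<close>
definition height :: "'a set \<Rightarrow> ('a \<Rightarrow> 'a \<Rightarrow> bool) \<Rightarrow> 'a \<Rightarrow> nat" where
  "height P le x = Max {card C | C. pchain P le C \<and> (\<forall>c\<in>C. le c x)} - 1"

definition rk :: "'a set \<Rightarrow> ('a \<Rightarrow> 'a \<Rightarrow> bool) \<Rightarrow> nat" where
  "rk P le = Max (height P le ` P)"

definition covers :: "'a set \<Rightarrow> ('a \<Rightarrow> 'a \<Rightarrow> bool) \<Rightarrow> 'a \<Rightarrow> 'a \<Rightarrow> bool" where
  "covers P le x y \<longleftrightarrow> x \<in> P \<and> y \<in> P \<and> le x y \<and> x \<noteq> y \<and>
     \<not> (\<exists>z\<in>P. le x z \<and> le z y \<and> z \<noteq> x \<and> z \<noteq> y)"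

definition ranked :: "'a set \<Rightarrow> ('a \<Rightarrow> 'a \<Rightarrow> bool) \<Rightarrow> bool" where
  "ranked P le \<longleftrightarrow> (\<forall>x\<in>P. \<forall>y\<in>P. covers P le x y \<longrightarrow> height P le y = height P le x + 1)"

definition fin_ranked_poset :: "'a set \<Rightarrow> ('a \<Rightarrow> 'a \<Rightarrow> bool) \<Rightarrow> bool" where
  "fin_ranked_poset P le \<longleftrightarrow> finite P \<and> partial_order_on' P le \<and>
     (\<exists>z\<in>P. \<forall>x\<in>P. le x z \<longrightarrow> x = z) \<and>
     (\<forall>z\<in>P. \<forall>z'\<in>P. (\<forall>x\<in>P. le x z \<longrightarrow> x = z) \<and> (\<forall>x\<in>P. le x z' \<longrightarrow> x = z') \<longrightarrow> z = z') \<and>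
     ranked P le"

definition atoms :: "'a set \<Rightarrow> ('a \<Rightarrow> 'a \<Rightarrow> bool) \<Rightarrow> 'a set" where
  "atoms P le = {x \<in> P. height P le x = 1}"

definition upper_bounds :: "'a set \<Rightarrow> ('a \<Rightarrow> 'a \<Rightarrow> bool) \<Rightarrow> 'a set \<Rightarrow> 'a set" where
  "upper_bounds P le T = {y \<in> P. \<forall>t\<in>T. le t y}"

definition joins :: "'a set \<Rightarrow> ('a \<Rightarrow> 'a \<Rightarrow> bool) \<Rightarrow> 'a set \<Rightarrow> 'a set" where
  "joins P le T = {y \<in> upper_bounds P le T. \<forall>z\<in>upper_bounds P le T. le z y \<longrightarrow> z = y}"

definition lower_bounds :: "'a set \<Rightarrow> ('a \<Rightarrow> 'a \<Rightarrow> bool) \<Rightarrow> 'a set \<Rightarrow> 'a set" where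
  "lower_bounds P le T = {y \<in> P. \<forall>t\<in>T. le y t}"

definition ljoin :: "'a set \<Rightarrow> ('a \<Rightarrow> 'a \<Rightarrow> bool) \<Rightarrow> 'a \<Rightarrow> 'a \<Rightarrow> 'a" where
  "ljoin L le x y = (THE j. j \<in> upper_bounds L le {x, y} \<and> (\<forall>u\<in>upper_bounds L le {x, y}. le j u))"

definition lmeet :: "'a set \<Rightarrow> ('a \<Rightarrow> 'a \<Rightarrow> bool) \<Rightarrow> 'a \<Rightarrow> 'a \<Rightarrow> 'a" where
  "lmeet L le x y = (THE m. m \<in> lower_bounds L le {x, y} \<and> (\<forall>u\<in>lower_bounds L le {x, y}. le u m))"

definition is_lattice :: "'a set \<Rightarrow> ('a \<Rightarrow> 'a \<Rightarrow> bool) \<Rightarrow> bool" where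
  "is_lattice L le \<longleftrightarrow> partial_order_on' L le \<and>
     (\<forall>x\<in>L. \<forall>y\<in>L.
        (\<exists>j\<in>upper_bounds L le {x, y}. \<forall>u\<in>upper_bounds L le {x, y}. le j u) \<and>
        (\<exists>m\<in>lower_bounds L le {x, y}. \<forall>u\<in>lower_bounds L le {x, y}. le u m))"

definition geometric :: "'a set \<Rightarrow> ('a \<Rightarrow> 'a \<Rightarrow> bool) \<Rightarrow> bool" where
  "geometric L le \<longleftrightarrow> is_lattice L le \<and>
     (\<forall>x\<in>L. \<forall>y\<in>L. covers L le x y \<longleftrightarrow>
        (\<exists>a\<in>atoms L le. \<not> le a x \<and> y = ljoin L le x a))"

definition down :: "'a set \<Rightarrow> ('a \<Rightarrow> 'a \<Rightarrow> bool) \<Rightarrow> 'a \<Rightarrow> 'a set" where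
  "down P le x = {y \<in> P. le y x}"

definition up :: "'a set \<Rightarrow> ('a \<Rightarrow> 'a \<Rightarrow> bool) \<Rightarrow> 'a \<Rightarrow> 'a set" where
  "up P le x = {y \<in> P. le x y}"

definition locally_geometric :: "'a set \<Rightarrow> ('a \<Rightarrow> 'a \<Rightarrow> bool) \<Rightarrow> bool" where
  "locally_geometric P le \<longleftrightarrow> (\<forall>x\<in>P. geometric (down P le x) le)"

definition modular_elem :: "'a set \<Rightarrow> ('a \<Rightarrow> 'a \<Rightarrow> bool) \<Rightarrow> 'a \<Rightarrow> bool" where
  "modular_elem L le x \<longleftrightarrow> x \<in> L \<and>
     (\<forall>y\<in>L. \<forall>z\<in>L. le z x \<longrightarrow>
        lmeet L le x (ljoin L le y z) = ljoin L le (lmeet L le x y) z)"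

definition maximal_elems :: "'a set \<Rightarrow> ('a \<Rightarrow> 'a \<Rightarrow> bool) \<Rightarrow> 'a set" where
  "maximal_elems P le = {x \<in> P. \<forall>y\<in>P. le x y \<longrightarrow> y = x}"

definition order_ideal :: "'a set \<Rightarrow> ('a \<Rightarrow> 'a \<Rightarrow> bool) \<Rightarrow> 'a set \<Rightarrow> bool" where
  "order_ideal P le Q \<longleftrightarrow> Q \<subseteq> P \<and> (\<forall>y\<in>Q. \<forall>x\<in>P. le x y \<longrightarrow> x \<in> Q)"

definition pure :: "'a set \<Rightarrow> ('a \<Rightarrow> 'a \<Rightarrow> bool) \<Rightarrow> bool" where
  "pure Q le \<longleftrightarrow> (\<forall>x\<in>maximal_elems Q le. \<forall>y\<in>maximal_elems Q le. height Q le x = height Q le y)"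

definition join_closed :: "'a set \<Rightarrow> ('a \<Rightarrow> 'a \<Rightarrow> bool) \<Rightarrow> 'a set \<Rightarrow> bool" where
  "join_closed P le Q \<longleftrightarrow> (\<forall>T. T \<subseteq> Q \<longrightarrow> joins P le T \<subseteq> Q)"

definition TM_ideal :: "'a set \<Rightarrow> ('a \<Rightarrow> 'a \<Rightarrow> bool) \<Rightarrow> 'a set \<Rightarrow> bool" where
  "TM_ideal P le Q \<longleftrightarrow> order_ideal P le Q \<and> pure Q le \<and> join_closed P le Q \<and>
     (\<forall>y\<in>Q. \<forall>a\<in>atoms P le - atoms Q le. card (joins P le {a, y}) = 1) \<and>
     (\<forall>x\<in>maximal_elems P le. \<exists>y\<in>maximal_elems Q le. modular_elem (down P le x) le y)"

definition poset_iso :: "('a \<Rightarrow> 'a \<Rightarrow> bool) \<Rightarrow> 'a set \<Rightarrow> 'a set \<Rightarrow> ('a \<Rightarrow> 'a) \<Rightarrow> bool" where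
  "poset_iso le A B f \<longleftrightarrow> bij_betw f A B \<and> (\<forall>x\<in>A. \<forall>y\<in>A. le x y \<longleftrightarrow> le (f x) (f y))"

end

theory Submission
  imports Defs
begin

text \<open>Joining with the atom \<open>a\<close> sends each \<open>y \<in> Q\<close> to the unique minimal upper bound
\<open>a \<squnion> y\<close>, which covers \<open>y\<close> because \<open>a \<notin> Q\<close>. Join-closedness of \<open>Q\<close> makes this map
order-reflecting: if \<open>a \<squnion> y \<le> a \<squnion> y'\<close>, then \<open>y \<squnion> y'\<close> lies in \<open>Q\<close> between \<open>y'\<close> and its
cover \<open>a \<squnion> y'\<close>, so it equals \<open>y'\<close>. For surjectivity onto \<open>z \<ge> a\<close>, choose a maximal \<open>x \<ge> z\<close>
and a maximal \<open>y\<^sub>0 \<in> Q\<close> modular in \<open>[0, x]\<close>; the rank hypothesis forces \<open>y\<^sub>0 \<squnion> a = x\<close>, and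
modularity of \<open>y\<^sub>0\<close> together with the exchange property of geometric lattices gives
\<open>(y\<^sub>0 \<sqinter> z) \<squnion> a = z\<close>.\<close>

lemma partial_order_on'_subset:
  "partial_order_on' S le \<Longrightarrow> T \<subseteq> S \<Longrightarrow> partial_order_on' T le"
  unfolding partial_order_on'_def by (meson subsetD)

lemma partial_order_on'_refl: "partial_order_on' S le \<Longrightarrow> x \<in> S \<Longrightarrow> le x x"
  unfolding partial_order_on'_def by blast

lemma partial_order_on'_antisym:
  "partial_order_on' S le \<Longrightarrow> x \<in> S \<Longrightarrow> y \<in> S \<Longrightarrow> le x y \<Longrightarrow> le y x \<Longrightarrow> x = y"
  unfolding partial_order_on'_def by blast

lemma partial_order_on'_trans:
  "partial_order_on' S le \<Longrightarrow> x \<in> S \<Longrightarrow> y \<in> S \<Longrightarrow> z \<in> S \<Longrightarrow> le x y \<Longrightarrow> le y z \<Longrightarrow> le x z"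
  unfolding partial_order_on'_def by blast

lemma height_order_ideal:
  assumes "order_ideal S le D" "v \<in> D"
  shows "height D le v = height S le v"
proof -
  have "{card C |C. pchain D le C \<and> (\<forall>c\<in>C. le c v)} = {card C |C. pchain S le C \<and> (\<forall>c\<in>C. le c v)}"
    using assms unfolding order_ideal_def pchain_def by blast
  then show ?thesis unfolding height_def by simp
qed

lemma atoms_order_ideal: "order_ideal S le D \<Longrightarrow> atoms D le = atoms S le \<inter> D"
  using height_order_ideal[of S le D] unfolding atoms_def order_ideal_def by auto

lemma covers_order_ideal:
  "order_ideal S le D \<Longrightarrow> u \<in> D \<Longrightarrow> v \<in> D \<Longrightarrow> covers D le u v \<longleftrightarrow> covers S le u v"
  unfolding order_ideal_def covers_def by blast

lemma order_ideal_down: "partial_order_on' P le \<Longrightarrow> x \<in> P \<Longrightarrow> order_ideal P le (down P le x)"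
  unfolding order_ideal_def down_def using partial_order_on'_trans[of P le _ _ x] by blast

lemma height_strict_mono:
  assumes fin: "finite S" and po: "partial_order_on' S le"
    and "u \<in> S" "v \<in> S" "le u v" "u \<noteq> v"
  shows "height S le u < height S le v"
proof -
  let ?lengths = "\<lambda>v. {card C |C. pchain S le C \<and> (\<forall>c\<in>C. le c v)}"
  have fin_lengths: "finite (?lengths w)" for w
    by (rule finite_subset[of _ "{..card S}"]) (auto simp: pchain_def fin intro: card_mono)
  have "pchain S le {u}"
    using \<open>u \<in> S\<close> partial_order_on'_refl[OF po] by (auto simp: pchain_def)
  then have one: "1 \<in> ?lengths u"
    using partial_order_on'_refl[OF po \<open>u \<in> S\<close>] by force
  then have "Max (?lengths u) \<in> ?lengths u"
    using fin_lengths by (intro Max_in) auto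
  then obtain C where C: "pchain S le C" "\<forall>c\<in>C. le c u" "card C = Max (?lengths u)"
    by auto
  have "v \<notin> C"
    using C partial_order_on'_antisym[OF po \<open>u \<in> S\<close> \<open>v \<in> S\<close>] assms(5,6) by auto
  have CS: "C \<subseteq> S" and "finite C"
    using C fin unfolding pchain_def by (auto intro: finite_subset)
  have "pchain S le (insert v C)" "\<forall>c\<in>insert v C. le c v"
    using C CS partial_order_on'_trans[OF po _ \<open>u \<in> S\<close> \<open>v \<in> S\<close>] assms(5)
      partial_order_on'_refl[OF po \<open>v \<in> S\<close>] \<open>v \<in> S\<close>
    unfolding pchain_def by auto
  then have "card (insert v C) \<in> ?lengths v" by blast
  then have "card C + 1 \<le> Max (?lengths v)"
    using \<open>v \<notin> C\<close> \<open>finite C\<close> fin_lengths by (simp add: Max_ge)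
  moreover have "1 \<le> Max (?lengths u)"
    using one fin_lengths by (simp add: Max_ge)
  ultimately show ?thesis using C unfolding height_def by simp
qed

lemma height_mono:
  assumes "finite S" "partial_order_on' S le" "u \<in> S" "v \<in> S" "le u v"
  shows "height S le u \<le> height S le v"
  using height_strict_mono[OF assms] by (cases "u = v") auto

lemma ex_maximal_in_subset:
  assumes fin: "finite S" and po: "partial_order_on' S le" and "T \<subseteq> S" "t \<in> T"
  shows "\<exists>w\<in>T. \<forall>v\<in>T. le w v \<longrightarrow> v = w"
proof -
  have "finite T" using fin \<open>T \<subseteq> S\<close> by (rule finite_subset[rotated])
  then obtain w where w: "w \<in> T" "height S le w = Max (height S le ` T)"
    using Max_in[of "height S le ` T"] \<open>t \<in> T\<close> by fastforce
  then have "\<forall>v\<in>T. height S le v \<le> height S le w"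
    using \<open>finite T\<close> by simp
  then show ?thesis
    using w(1) height_strict_mono[OF fin po] \<open>T \<subseteq> S\<close> by (metis leD subsetD)
qed

lemma ex_covers_between:
  assumes fin: "finite S" and po: "partial_order_on' S le"
    and "v \<in> S" "W \<in> S" "le v W" "v \<noteq> W"
  shows "\<exists>W'\<in>S. le v W' \<and> covers S le W' W"
proof -
  define T where "T = {w\<in>S. le v w \<and> le w W \<and> w \<noteq> W}"
  have "v \<in> T" using assms partial_order_on'_refl[OF po] unfolding T_def by auto
  then obtain w where w: "w \<in> T" "\<forall>u\<in>T. le w u \<longrightarrow> u = w"
    using ex_maximal_in_subset[OF fin po, of T] unfolding T_def by blast
  then have w': "w \<in> S" "le v w" "le w W" "w \<noteq> W"
    unfolding T_def by blast+
  have "z \<in> T" if "z \<in> S" "le w z" "le z W" "z \<noteq> W" for z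
    using that w' partial_order_on'_trans[OF po \<open>v \<in> S\<close> w'(1) that(1)] unfolding T_def by blast
  then have "covers S le w W"
    using w(2) w' \<open>W \<in> S\<close> unfolding covers_def by blast
  then show ?thesis using w' by blast
qed

lemma ex_maximal_above:
  assumes fin: "finite S" and po: "partial_order_on' S le" and "v \<in> S"
  shows "\<exists>m\<in>maximal_elems S le. le v m"
proof -
  have "v \<in> up S le v" using assms partial_order_on'_refl unfolding up_def by fastforce
  then obtain w where w: "w \<in> up S le v" "\<forall>u\<in>up S le v. le w u \<longrightarrow> u = w"
    using ex_maximal_in_subset[OF fin po, of "up S le v"] unfolding up_def by blast
  then have "w \<in> maximal_elems S le"
    using partial_order_on'_trans[OF po] \<open>v \<in> S\<close> unfolding up_def maximal_elems_def by blast
  then show ?thesis using w unfolding up_def by auto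
qed

lemma height_maximal_eq_rk:
  assumes fin: "finite S" and po: "partial_order_on' S le" and "pure S le"
    and m: "m \<in> maximal_elems S le"
  shows "height S le m = rk S le"
proof -
  have "S \<noteq> {}" using m unfolding maximal_elems_def by auto
  then obtain q where q: "q \<in> S" "height S le q = rk S le"
    using Max_in[of "height S le ` S"] fin unfolding rk_def by fastforce
  obtain m' where m': "m' \<in> maximal_elems S le" "le q m'"
    using ex_maximal_above[OF fin po q(1)] by auto
  then have "m' \<in> S" unfolding maximal_elems_def by auto
  then have "height S le m' = rk S le"
    using height_mono[OF fin po q(1) _ m'(2)] q fin unfolding rk_def
    by (metis Max_ge finite_imageI image_eqI le_antisym)
  then show ?thesis
    using \<open>pure S le\<close> m m'(1) unfolding pure_def by metis
qed

lemma ljoin_lub: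
  assumes lat: "is_lattice L le" and "x \<in> L" "y \<in> L"
  shows "ljoin L le x y \<in> L \<and> le x (ljoin L le x y) \<and> le y (ljoin L le x y) \<and>
    (\<forall>u\<in>L. le x u \<longrightarrow> le y u \<longrightarrow> le (ljoin L le x y) u)"
proof -
  let ?U = "upper_bounds L le {x, y}"
  obtain j where j: "j \<in> ?U" "\<forall>u\<in>?U. le j u"
    using lat assms unfolding is_lattice_def by blast
  moreover have "partial_order_on' L le"
    using lat unfolding is_lattice_def by blast
  ultimately have "ljoin L le x y = j"
    unfolding ljoin_def
    by (intro the_equality) (auto intro: partial_order_on'_antisym simp: upper_bounds_def)
  then show ?thesis using j unfolding upper_bounds_def by auto
qed

lemma lmeet_eq_ljoin_converse: "lmeet L le = ljoin L (\<lambda>x y. le y x)"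
  by (simp add: fun_eq_iff lmeet_def ljoin_def lower_bounds_def upper_bounds_def)

lemma is_lattice_converse: "is_lattice L le \<Longrightarrow> is_lattice L (\<lambda>x y. le y x)"
  unfolding is_lattice_def partial_order_on'_def lower_bounds_def upper_bounds_def by blast

lemma lmeet_glb:
  assumes "is_lattice L le" and "x \<in> L" "y \<in> L"
  shows "lmeet L le x y \<in> L \<and> le (lmeet L le x y) x \<and> le (lmeet L le x y) y \<and>
    (\<forall>u\<in>L. le u x \<longrightarrow> le u y \<longrightarrow> le u (lmeet L le x y))"
  using ljoin_lub[OF is_lattice_converse[OF assms(1)] assms(2,3)]
  by (simp add: lmeet_eq_ljoin_converse)

locale fin_geometric_lattice =
  fixes L :: "'a set" and le :: "'a \<Rightarrow> 'a \<Rightarrow> bool" (infix "\<preceq>" 50)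
  assumes finite: "finite L" and geometric: "geometric L le"
begin

abbreviation join :: "'a \<Rightarrow> 'a \<Rightarrow> 'a" (infixl "\<squnion>" 65) where
  "x \<squnion> y \<equiv> ljoin L le x y"

abbreviation meet :: "'a \<Rightarrow> 'a \<Rightarrow> 'a" (infixl "\<sqinter>" 70) where
  "x \<sqinter> y \<equiv> lmeet L le x y"

lemma lattice: "is_lattice L le"
  using geometric unfolding geometric_def by blast

lemma partial_order: "partial_order_on' L le"
  using lattice unfolding is_lattice_def by blast

lemma refl: "x \<in> L \<Longrightarrow> x \<preceq> x"
  using partial_order_on'_refl[OF partial_order] .

lemma antisym: "x \<in> L \<Longrightarrow> y \<in> L \<Longrightarrow> x \<preceq> y \<Longrightarrow> y \<preceq> x \<Longrightarrow> x = y"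
  using partial_order_on'_antisym[OF partial_order] .

lemma trans: "x \<in> L \<Longrightarrow> y \<in> L \<Longrightarrow> z \<in> L \<Longrightarrow> x \<preceq> y \<Longrightarrow> y \<preceq> z \<Longrightarrow> x \<preceq> z"
  using partial_order_on'_trans[OF partial_order] .

lemma join_in: "x \<in> L \<Longrightarrow> y \<in> L \<Longrightarrow> x \<squnion> y \<in> L"
  and join_upper1: "x \<in> L \<Longrightarrow> y \<in> L \<Longrightarrow> x \<preceq> x \<squnion> y"
  and join_upper2: "x \<in> L \<Longrightarrow> y \<in> L \<Longrightarrow> y \<preceq> x \<squnion> y"
  and join_least: "x \<in> L \<Longrightarrow> y \<in> L \<Longrightarrow> u \<in> L \<Longrightarrow> x \<preceq> u \<Longrightarrow> y \<preceq> u \<Longrightarrow> x \<squnion> y \<preceq> u"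
  using ljoin_lub[OF lattice] by blast+

lemma meet_in: "x \<in> L \<Longrightarrow> y \<in> L \<Longrightarrow> x \<sqinter> y \<in> L"
  and meet_lower1: "x \<in> L \<Longrightarrow> y \<in> L \<Longrightarrow> x \<sqinter> y \<preceq> x"
  and meet_lower2: "x \<in> L \<Longrightarrow> y \<in> L \<Longrightarrow> x \<sqinter> y \<preceq> y"
  and meet_greatest: "x \<in> L \<Longrightarrow> y \<in> L \<Longrightarrow> u \<in> L \<Longrightarrow> u \<preceq> x \<Longrightarrow> u \<preceq> y \<Longrightarrow> u \<preceq> x \<sqinter> y"
  using lmeet_glb[OF lattice] by blast+

lemma join_commute: "x \<squnion> y = y \<squnion> x"
  unfolding ljoin_def by (simp add: insert_commute)

lemma join_le_iff: "x \<in> L \<Longrightarrow> y \<in> L \<Longrightarrow> u \<in> L \<Longrightarrow> x \<squnion> y \<preceq> u \<longleftrightarrow> x \<preceq> u \<and> y \<preceq> u"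
  by (meson join_in join_least join_upper1 join_upper2 trans)

lemma le_joinI1: "u \<in> L \<Longrightarrow> x \<in> L \<Longrightarrow> y \<in> L \<Longrightarrow> u \<preceq> x \<Longrightarrow> u \<preceq> x \<squnion> y"
  by (meson join_in join_upper1 trans)

lemma le_joinI2: "u \<in> L \<Longrightarrow> x \<in> L \<Longrightarrow> y \<in> L \<Longrightarrow> u \<preceq> y \<Longrightarrow> u \<preceq> x \<squnion> y"
  by (meson join_in join_upper2 trans)

lemma join_assoc: "x \<in> L \<Longrightarrow> y \<in> L \<Longrightarrow> z \<in> L \<Longrightarrow> x \<squnion> y \<squnion> z = x \<squnion> (y \<squnion> z)"
  by (intro antisym) (simp_all add: join_in join_le_iff le_joinI1 le_joinI2 refl)

lemma join_absorb: "x \<in> L \<Longrightarrow> y \<in> L \<Longrightarrow> y \<preceq> x \<Longrightarrow> x \<squnion> y = x"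
  by (intro antisym) (simp_all add: join_in join_le_iff le_joinI1 refl)

lemma ex_bottom:
  assumes "L \<noteq> {}"
  obtains bot where "bot \<in> L" "\<And>v. v \<in> L \<Longrightarrow> bot \<preceq> v"
proof -
  obtain m where m: "m \<in> L" "\<forall>v\<in>L. height L le m \<le> height L le v"
    using ex_has_least_nat[of "\<lambda>v. v \<in> L" _ "height L le"] assms by blast
  have "m \<sqinter> v = m" if "v \<in> L" for v
  proof (rule ccontr)
    assume "m \<sqinter> v \<noteq> m"
    then have "height L le (m \<sqinter> v) < height L le m"
      using height_strict_mono[OF finite partial_order] m(1) that meet_in meet_lower1 by blast
    then show False
      using m that meet_in by (meson leD)
  qed
  then show thesis
    using that m(1) meet_lower2 by metis
qed

lemma atom_in: "d \<in> atoms L le \<Longrightarrow> d \<in> L"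
  unfolding atoms_def by blast

lemma atom_le_atom_eq:
  assumes "c \<in> atoms L le" "d \<in> atoms L le" "c \<preceq> d"
  shows "c = d"
  using assms height_strict_mono[OF finite partial_order, of c d]
  unfolding atoms_def by fastforce

lemma covers_iff_join_atom:
  "u \<in> L \<Longrightarrow> v \<in> L \<Longrightarrow> covers L le u v \<longleftrightarrow> (\<exists>d\<in>atoms L le. \<not> d \<preceq> u \<and> v = u \<squnion> d)"
  using geometric unfolding geometric_def by blast

lemma covers_join_atom:
  "u \<in> L \<Longrightarrow> d \<in> atoms L le \<Longrightarrow> \<not> d \<preceq> u \<Longrightarrow> covers L le u (u \<squnion> d)"
  using covers_iff_join_atom join_in atom_in by blast

lemma ex_atom_le_not_le:
  assumes "v \<in> L" "w \<in> L" "v \<preceq> w" "v \<noteq> w"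
  shows "\<exists>b\<in>atoms L le. b \<preceq> w \<and> \<not> b \<preceq> v"
proof -
  obtain w' where w': "w' \<in> L" "v \<preceq> w'" "covers L le w' w"
    using ex_covers_between[OF finite partial_order assms] by blast
  then obtain b where b: "b \<in> atoms L le" "\<not> b \<preceq> w'" "w = w' \<squnion> b"
    using covers_iff_join_atom assms(2) by blast
  have "b \<preceq> w" "\<not> b \<preceq> v"
    using b w' atom_in join_upper2 trans assms(1) by blast+
  then show ?thesis using b(1) by blast
qed

text \<open>The Steinitz exchange property, in the form delivered by the covering axiom.\<close>

lemma atom_exchange:
  assumes "v \<in> L" "b \<in> atoms L le" "d \<in> atoms L le" "\<not> b \<preceq> v" "b \<preceq> v \<squnion> d"
  shows "d \<preceq> v \<squnion> b"
proof -
  have L: "b \<in> L" "d \<in> L"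
    using assms atom_in by auto
  have "\<not> d \<preceq> v"
    using assms(1,4,5) L(2) join_absorb by fastforce
  then have "covers L le v (v \<squnion> d)"
    using covers_join_atom assms by blast
  moreover have "v \<squnion> b \<in> L" "v \<preceq> v \<squnion> b" "b \<preceq> v \<squnion> b"
    using assms(1) L(1) join_in join_upper1 join_upper2 by blast+
  moreover have "v \<squnion> b \<preceq> v \<squnion> d"
    using assms(1,5) L join_in join_least join_upper1 by blast
  ultimately have "v \<squnion> b = v \<squnion> d"
    using assms(4) unfolding covers_def by fastforce
  then show ?thesis
    using L join_upper2 assms(1) by metis
qed


lemma ex_atom_le:
  assumes "v \<in> L" "\<not> (\<forall>w\<in>L. v \<preceq> w)"
  shows "\<exists>c\<in>atoms L le. c \<preceq> v"
proof -
  obtain bot where bot: "bot \<in> L" "\<And>w. w \<in> L \<Longrightarrow> bot \<preceq> w"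
    using ex_bottom assms(1) by blast
  then have "bot \<noteq> v" using assms(2) by blast
  then show ?thesis
    using ex_atom_le_not_le[OF bot(1) assms(1) bot(2)[OF assms(1)]] by blast
qed

lemma modular_elem_exchange:
  assumes y: "modular_elem L le y" and L: "a \<in> L" "z \<in> L"
    and b: "b \<in> atoms L le" "\<not> b \<preceq> a \<squnion> z" "b \<preceq> a \<squnion> z \<squnion> d"
    and d: "d \<in> atoms L le" "d \<preceq> y" and "z \<preceq> y"
  shows "d \<preceq> y \<sqinter> (a \<squnion> b) \<squnion> z"
proof -
  have yL: "y \<in> L" and bdL: "b \<in> L" "d \<in> L"
    using y b d atom_in unfolding modular_elem_def by auto
  have "d \<preceq> a \<squnion> z \<squnion> b"
    using atom_exchange[of "a \<squnion> z" b d] b d L join_in by blast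
  also have "a \<squnion> z \<squnion> b = a \<squnion> b \<squnion> z"
    using L bdL by (simp add: join_assoc join_commute[of z b])
  finally have "d \<preceq> y \<sqinter> (a \<squnion> b \<squnion> z)"
    using meet_greatest yL L bdL d(2) join_in by simp
  also have "y \<sqinter> (a \<squnion> b \<squnion> z) = y \<sqinter> (a \<squnion> b) \<squnion> z"
    using y L bdL \<open>z \<preceq> y\<close> join_in unfolding modular_elem_def by blast
  finally show ?thesis .
qed

text \<open>If the line \<open>a \<squnion> b\<close> missed \<open>y\<close>, then \<open>m = y \<sqinter> (a \<squnion> b)\<close> would be the bottom. A minimal
\<open>Z \<preceq> y\<close> with \<open>b \<preceq> a \<squnion> Z\<close> lies strictly above \<open>m\<close>; writing \<open>Z = Z\<^sub>1 \<squnion> d\<close> for a cover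
\<open>Z\<^sub>1\<close> of \<open>Z\<close>, exchange puts \<open>d\<close> below \<open>m \<squnion> Z\<^sub>1 = Z\<^sub>1\<close>, which is absurd.\<close>

lemma modular_elem_meets_line:
  assumes y: "modular_elem L le y" and a: "a \<in> atoms L le"
    and b: "b \<in> atoms L le" "a \<noteq> b" "b \<preceq> a \<squnion> y"
  shows "\<exists>c\<in>atoms L le. c \<preceq> y \<and> c \<preceq> a \<squnion> b"
proof (rule ccontr)
  assume no_atom: "\<not> ?thesis"
  have L: "y \<in> L" "a \<in> L" "b \<in> L" "a \<squnion> b \<in> L"
    using y a b atom_in join_in unfolding modular_elem_def by auto
  define m where "m = y \<sqinter> (a \<squnion> b)"
  have mL: "m \<in> L"
    using meet_in L unfolding m_def by blast
  have m_bot: "m \<preceq> w" if w: "w \<in> L" for w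
  proof (rule ccontr)
    assume "\<not> m \<preceq> w"
    then obtain c where "c \<in> atoms L le" "c \<preceq> m"
      using ex_atom_le[OF mL] w by blast
    then show False
      using no_atom atom_in trans[OF _ mL] meet_lower1 meet_lower2 L unfolding m_def by metis
  qed
  define S where "S = {Z \<in> L. Z \<preceq> y \<and> b \<preceq> a \<squnion> Z}"
  have "y \<in> S"
    using b L unfolding S_def by (simp add: refl join_commute)
  then obtain Z where Z: "Z \<in> S" "\<forall>Z'\<in>S. height L le Z \<le> height L le Z'"
    using ex_has_least_nat[of "\<lambda>Z. Z \<in> S" y "height L le"] by blast
  then have ZL: "Z \<in> L" "Z \<preceq> y" "b \<preceq> a \<squnion> Z"
    unfolding S_def by auto
  have "Z \<noteq> m"
  proof
    assume "Z = m"
    then have "b \<preceq> a"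
      using ZL(3) join_absorb[OF L(2) mL m_bot[OF L(2)]] by simp
    then show False
      using atom_le_atom_eq[OF b(1) a] b(2) by simp
  qed
  then obtain Z1 where Z1: "Z1 \<in> L" "covers L le Z1 Z"
    using ex_covers_between[OF finite partial_order mL ZL(1) m_bot[OF ZL(1)]] by blast
  then obtain d where d: "d \<in> atoms L le" "\<not> d \<preceq> Z1" "Z = Z1 \<squnion> d"
    using covers_iff_join_atom[OF Z1(1) ZL(1)] by blast
  have Z1Z: "Z1 \<preceq> Z" "Z1 \<noteq> Z"
    using Z1(2) unfolding covers_def by blast+
  have dL: "d \<in> L" using d atom_in by blast
  have "height L le Z1 < height L le Z"
    using height_strict_mono[OF finite partial_order Z1(1) ZL(1) Z1Z] .
  then have "Z1 \<notin> S" using Z by fastforce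
  moreover have Z1y: "Z1 \<preceq> y"
    using trans[OF Z1(1) ZL(1) L(1) Z1Z(1) ZL(2)] .
  ultimately have "\<not> b \<preceq> a \<squnion> Z1"
    using Z1(1) unfolding S_def by blast
  moreover have "b \<preceq> a \<squnion> Z1 \<squnion> d"
    using ZL(3) d(3) L Z1(1) dL by (simp add: join_assoc)
  moreover have "d \<preceq> y"
    using trans[OF dL ZL(1) L(1) _ ZL(2)] join_upper2[OF Z1(1) dL] d(3) by simp
  ultimately have "d \<preceq> m \<squnion> Z1"
    using modular_elem_exchange[OF y L(2) Z1(1) b(1) _ _ d(1) _ Z1y] unfolding m_def by blast
  also have "m \<squnion> Z1 = Z1"
    using join_absorb[OF Z1(1) mL m_bot[OF Z1(1)]] by (simp add: join_commute)
  finally show False using d(2) by blast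
qed

lemma modular_elem_meet_join_atom:
  assumes y: "modular_elem L le y" and a: "a \<in> atoms L le" "\<not> a \<preceq> y"
    and z: "z \<in> L" "a \<preceq> z" "z \<preceq> y \<squnion> a"
  shows "(y \<sqinter> z) \<squnion> a = z"
proof (rule ccontr)
  let ?u = "(y \<sqinter> z) \<squnion> a"
  have L: "y \<in> L" "a \<in> L" "y \<sqinter> z \<in> L" "?u \<in> L"
    using y a z atom_in meet_in join_in unfolding modular_elem_def by auto
  have "?u \<preceq> z"
    using L z join_least meet_lower2 by blast
  moreover assume "?u \<noteq> z"
  ultimately obtain b where b: "b \<in> atoms L le" "b \<preceq> z" "\<not> b \<preceq> ?u"
    using ex_atom_le_not_le L(4) z(1) by blast
  have bL: "b \<in> L" using b atom_in by blast
  have "b \<noteq> a"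
    using b(3) L join_upper2 by blast
  moreover have "b \<preceq> a \<squnion> y"
    using trans[OF bL z(1) join_in[OF L(1,2)] b(2) z(3)] by (simp add: join_commute)
  ultimately obtain c where c: "c \<in> atoms L le" "c \<preceq> y" "c \<preceq> a \<squnion> b"
    using modular_elem_meets_line[OF y a(1) b(1)] by blast
  have cL: "c \<in> L" using c atom_in by blast
  have "a \<squnion> b \<preceq> z"
    using z b(2) L bL join_least by blast
  then have "c \<preceq> y \<sqinter> z"
    using trans[OF cL join_in[OF L(2) bL] z(1) c(3)] c(2) cL L z(1) meet_greatest by blast
  then have "a \<squnion> c \<preceq> ?u"
    using L cL by (simp add: join_le_iff le_joinI1 le_joinI2 refl)
  moreover have "\<not> c \<preceq> a"
    using atom_le_atom_eq[OF c(1) a(1)] c(2) a(2) by blast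
  then have "b \<preceq> a \<squnion> c"
    using atom_exchange[OF L(2) c(1) b(1)] c(3) by blast
  ultimately show False
    using trans[OF bL join_in[OF L(2) cL] L(4)] b(3) by blast
qed

end

lemma ljoin_down_in_joins:
  assumes po: "partial_order_on' P le" and x: "x \<in> P" and lat: "is_lattice (down P le x) le"
    and uv: "u \<in> down P le x" "v \<in> down P le x"
  shows "ljoin (down P le x) le u v \<in> joins P le {u, v}"
proof -
  let ?j = "ljoin (down P le x) le u v"
  have j: "?j \<in> down P le x" "le u ?j" "le v ?j"
    "\<And>w. w \<in> down P le x \<Longrightarrow> le u w \<Longrightarrow> le v w \<Longrightarrow> le ?j w"
    using ljoin_lub[OF lat uv] by blast+
  have "w = ?j" if "w \<in> P" "le u w" "le v w" "le w ?j" for w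
  proof -
    have "w \<in> down P le x"
      using order_ideal_down[OF po x] j(1) that unfolding order_ideal_def by blast
    then show ?thesis
      using j(1,4) that partial_order_on'_antisym[OF po] unfolding down_def by blast
  qed
  then show ?thesis
    using j(1-3) unfolding joins_def upper_bounds_def down_def by blast
qed

locale TM_ideal_atom =
  fixes P Q :: "'a set" and le :: "'a \<Rightarrow> 'a \<Rightarrow> bool" (infix "\<preceq>" 50) and a :: 'a
  assumes fin_ranked_poset: "fin_ranked_poset P le"
    and locally_geometric: "locally_geometric P le"
    and TM_ideal: "TM_ideal P le Q"
    and atom: "a \<in> atoms P le - atoms Q le"
begin

lemma finite: "finite P"
  and partial_order: "partial_order_on' P le"
  and ranked: "ranked P le"
  using fin_ranked_poset unfolding fin_ranked_poset_def by blast+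

lemma trans: "x \<in> P \<Longrightarrow> y \<in> P \<Longrightarrow> z \<in> P \<Longrightarrow> x \<preceq> y \<Longrightarrow> y \<preceq> z \<Longrightarrow> x \<preceq> z"
  using partial_order_on'_trans[OF partial_order] .

lemma order_ideal: "order_ideal P le Q"
  using TM_ideal unfolding TM_ideal_def by blast

lemma joins_subset: "T \<subseteq> Q \<Longrightarrow> joins P le T \<subseteq> Q"
  using TM_ideal unfolding TM_ideal_def join_closed_def by blast

lemma Q_subset: "Q \<subseteq> P"
  using order_ideal unfolding order_ideal_def by blast

lemma atom_in: "a \<in> P"
  using atom unfolding atoms_def by blast

lemma atom_not_le: "y \<in> Q \<Longrightarrow> \<not> a \<preceq> y"
  using atom atom_in order_ideal atoms_order_ideal[OF order_ideal]
  unfolding order_ideal_def by blast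

lemma down_lattice: "x \<in> P \<Longrightarrow> fin_geometric_lattice (down P le x) le"
  using locally_geometric finite unfolding locally_geometric_def down_def
  by unfold_locales auto

lemma atom_in_atoms_down: "x \<in> P \<Longrightarrow> a \<preceq> x \<Longrightarrow> a \<in> atoms (down P le x) le"
  using atom atom_in atoms_order_ideal[OF order_ideal_down[OF partial_order]]
  unfolding down_def by blast

definition atom_join :: "'a \<Rightarrow> 'a" where
  "atom_join y = (THE j. j \<in> joins P le {a, y})"

lemma joins_atom: "y \<in> Q \<Longrightarrow> joins P le {a, y} = {atom_join y}"
proof -
  assume "y \<in> Q"
  then have "card (joins P le {a, y}) = 1"
    using TM_ideal atom unfolding TM_ideal_def by blast
  then obtain j where "joins P le {a, y} = {j}"
    by (rule card_1_singletonE)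
  then show ?thesis unfolding atom_join_def by simp
qed

lemma atom_join_upper: "y \<in> Q \<Longrightarrow> atom_join y \<in> P \<and> a \<preceq> atom_join y \<and> y \<preceq> atom_join y"
  using joins_atom unfolding joins_def upper_bounds_def by blast

lemma atom_join_eq_ljoin:
  assumes "y \<in> Q" "x \<in> P" "y \<preceq> x" "a \<preceq> x"
  shows "atom_join y = ljoin (down P le x) le y a"
proof -
  have "y \<in> down P le x" "a \<in> down P le x"
    using assms Q_subset atom_in unfolding down_def by auto
  then have "ljoin (down P le x) le y a \<in> joins P le {y, a}"
    using ljoin_down_in_joins[OF partial_order assms(2)]
      fin_geometric_lattice.lattice[OF down_lattice[OF assms(2)]] by blast
  then show ?thesis
    using joins_atom[OF assms(1)] by (simp add: insert_commute)
qed

lemma covers_atom_join: "y \<in> Q \<Longrightarrow> covers P le y (atom_join y)"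
proof -
  assume y: "y \<in> Q"
  define x where "x = atom_join y"
  have x: "x \<in> P" "a \<preceq> x" "y \<preceq> x"
    using atom_join_upper[OF y] unfolding x_def by blast+
  interpret Lx: fin_geometric_lattice "down P le x" le
    using down_lattice[OF x(1)] .
  have yx: "y \<in> down P le x"
    using x y Q_subset unfolding down_def by blast
  have "covers (down P le x) le y (ljoin (down P le x) le y a)"
    using Lx.covers_join_atom[OF yx atom_in_atoms_down[OF x(1,2)] atom_not_le[OF y]] .
  moreover have "ljoin (down P le x) le y a = x"
    using atom_join_eq_ljoin[OF y x(1,3,2)] unfolding x_def by simp
  moreover have "x \<in> down P le x"
    using x(1) partial_order_on'_refl[OF partial_order] unfolding down_def by blast
  ultimately show ?thesis
    using covers_order_ideal[OF order_ideal_down[OF partial_order x(1)] yx] unfolding x_def by simp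
qed

lemma atom_join_least:
  assumes y: "y \<in> Q" and x: "x \<in> P" "y \<preceq> x" "a \<preceq> x"
  shows "atom_join y \<preceq> x"
proof -
  interpret Lx: fin_geometric_lattice "down P le x" le
    using down_lattice[OF x(1)] .
  have "y \<in> down P le x" "a \<in> down P le x" "x \<in> down P le x"
    using x y Q_subset atom_in partial_order_on'_refl[OF partial_order] unfolding down_def by auto
  then show ?thesis
    using Lx.join_least[of y a x] atom_join_eq_ljoin[OF y x] x(2,3) by simp
qed

lemma atom_join_mono:
  assumes y: "y \<in> Q" "y' \<in> Q" "y \<preceq> y'"
  shows "atom_join y \<preceq> atom_join y'"
  using atom_join_least[OF y(1)] atom_join_upper[OF y(2)] trans[OF _ _ _ y(3)] y Q_subset
  by blast

lemma atom_join_le_imp_le: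
  assumes y: "y \<in> Q" "y' \<in> Q" and le: "atom_join y \<preceq> atom_join y'"
  shows "y \<preceq> y'"
proof -
  define x where "x = atom_join y'"
  have x: "x \<in> P" "a \<preceq> x" "y' \<preceq> x" "covers P le y' x"
    using atom_join_upper[OF y(2)] covers_atom_join[OF y(2)] unfolding x_def by blast+
  have "y \<preceq> x"
    using trans[OF _ _ x(1) _ le[folded x_def]] atom_join_upper[OF y(1)] y(1) Q_subset by blast
  then have yy': "y \<in> down P le x" "y' \<in> down P le x"
    using x y Q_subset unfolding down_def by auto
  interpret Lx: fin_geometric_lattice "down P le x" le
    using down_lattice[OF x(1)] .
  define w where "w = ljoin (down P le x) le y y'"
  have w: "w \<in> P" "y \<preceq> w" "y' \<preceq> w" "w \<preceq> x"
    using Lx.join_in[OF yy'] Lx.join_upper1[OF yy'] Lx.join_upper2[OF yy']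
    unfolding w_def down_def by auto
  have "w \<in> joins P le {y, y'}"
    using ljoin_down_in_joins[OF partial_order x(1) Lx.lattice yy'] unfolding w_def .
  then have "w \<in> Q"
    using joins_subset[of "{y, y'}"] y by blast
  moreover have "w = y' \<or> w = x"
    using x(4) w(1,3,4) unfolding covers_def by blast
  moreover have "x \<notin> Q"
    using atom_not_le x(2) by blast
  ultimately show ?thesis
    using w(2) by blast
qed

lemma atom_join_maximal_eq:
  assumes rk: "rk Q le + 1 = rk P le"
    and x: "x \<in> maximal_elems P le" "a \<preceq> x"
    and y0: "y0 \<in> maximal_elems Q le" "y0 \<preceq> x"
  shows "atom_join y0 = x"
proof (rule ccontr)
  have xP: "x \<in> P" and y0Q: "y0 \<in> Q"
    using x y0 unfolding maximal_elems_def by blast+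
  have "height Q le y0 = rk Q le"
    using height_maximal_eq_rk[OF finite_subset[OF Q_subset finite]
        partial_order_on'_subset[OF partial_order Q_subset]] TM_ideal y0(1)
    unfolding TM_ideal_def by blast
  then have "height P le (atom_join y0) = rk P le"
    using covers_atom_join[OF y0Q] ranked height_order_ideal[OF order_ideal y0Q] rk
      Q_subset y0Q atom_join_upper[OF y0Q] unfolding ranked_def by force
  moreover assume "atom_join y0 \<noteq> x"
  ultimately have "rk P le < height P le x"
    using height_strict_mono[OF finite partial_order] atom_join_least[OF y0Q xP y0(2) x(2)]
      atom_join_upper[OF y0Q] xP by metis
  then show False
    using xP finite unfolding rk_def by (simp add: leD)
qed

lemma atom_join_surj:
  assumes rk: "rk Q le + 1 = rk P le" and z: "z \<in> P" "a \<preceq> z"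
  shows "\<exists>y\<in>Q. atom_join y = z"
proof -
  obtain x where x: "x \<in> maximal_elems P le" "z \<preceq> x"
    using ex_maximal_above[OF finite partial_order z(1)] by blast
  have xP: "x \<in> P" using x(1) unfolding maximal_elems_def by blast
  obtain y0 where y0: "y0 \<in> maximal_elems Q le" "modular_elem (down P le x) le y0"
    using TM_ideal x(1) unfolding TM_ideal_def by blast
  interpret Lx: fin_geometric_lattice "down P le x" le
    using down_lattice[OF xP] .
  have y0Q: "y0 \<in> Q" and y0x: "y0 \<in> down P le x"
    using y0 unfolding maximal_elems_def modular_elem_def by blast+
  have zx: "z \<in> down P le x" and ax: "a \<preceq> x"
    using x z xP trans[OF atom_in z(1) xP] unfolding down_def by auto
  have "atom_join y0 = x"
    using atom_join_maximal_eq[OF rk x(1) ax y0(1)] y0x unfolding down_def by blast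
  then have top: "ljoin (down P le x) le y0 a = x"
    using atom_join_eq_ljoin[OF y0Q xP _ ax] y0x unfolding down_def by auto
  define y where "y = lmeet (down P le x) le y0 z"
  have y: "y \<in> down P le x" "y \<preceq> y0"
    using Lx.meet_in[OF y0x zx] Lx.meet_lower1[OF y0x zx] unfolding y_def by blast+
  then have yQ: "y \<in> Q"
    using y0Q order_ideal unfolding order_ideal_def down_def by blast
  have "ljoin (down P le x) le y a = z"
    using Lx.modular_elem_meet_join_atom[OF y0(2) atom_in_atoms_down[OF xP ax]
        atom_not_le[OF y0Q] zx z(2)] top x(2) unfolding y_def by simp
  then have "atom_join y = z"
    using atom_join_eq_ljoin[OF yQ xP _ ax] y(1) unfolding down_def by auto
  then show ?thesis using yQ by blast
qed

lemma poset_iso_atom_join: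
  assumes "rk Q le + 1 = rk P le"
  shows "poset_iso le Q (up P le a) atom_join"
  unfolding poset_iso_def bij_betw_def
proof (intro conjI)
  show "inj_on atom_join Q"
    using atom_join_le_imp_le partial_order_on'_antisym[OF partial_order] Q_subset
      partial_order_on'_refl[OF partial_order] atom_join_upper
    by (intro inj_onI) (metis subsetD)
  show "atom_join ` Q = up P le a"
    using atom_join_upper atom_join_surj[OF assms] unfolding up_def by fastforce
  show "\<forall>y\<in>Q. \<forall>y'\<in>Q. y \<preceq> y' \<longleftrightarrow> atom_join y \<preceq> atom_join y'"
    using atom_join_mono atom_join_le_imp_le by blast
qed

end

theorem lemma4p4:
  fixes P Q :: "'a set" and le :: "'a \<Rightarrow> 'a \<Rightarrow> bool"
  assumes "fin_ranked_poset P le"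
    and "locally_geometric P le"
    and "TM_ideal P le Q"
    and "rk Q le + 1 = rk P le"
  shows "\<forall>a \<in> atoms P le - atoms Q le. \<exists>f. poset_iso le Q (up P le a) f"
proof
  fix a assume "a \<in> atoms P le - atoms Q le"
  then interpret TM_ideal_atom P Q le a
    using assms(1-3) by unfold_locales
  show "\<exists>f. poset_iso le Q (up P le a) f"
    using poset_iso_atom_join[OF assms(4)] by blast
qed

end
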